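(* Let $S$ be a set and let $\emptyset\neq\mathcal{T}\subseteq \mathcal{P}(S)$ contain a countable subfamily separating points of $S$. If $\mathcal{C}(\mathcal{T})\subseteq \mathcal{C}(\mathcal{E})$ for some $\emptyset\neq\mathcal{E}\subseteq \mathcal{P}(S)$, then every $A\in\mathcal{T}$ is of the form \[ A=\bigcup_{n\in\mathbb{N}} E^{*}_{n,1}\cap\cdots\cap E^{*}_{n,k_{n}}, \] where $k_n\in\mathbb{N}$, $E_{n,j}\in\mathcal{E}$, and each $E_{n,j}^{*}$ is either $E_{n,j}$ or its complement $S\setminus E_{n,j}$.
   Context: $C(S)$ is the set of countable subsets of $S$; $N_A(M)=|A\cap M|$; for nonempty $\mathcal{T}\subseteq\mathcal{P}(S)$, $\mathcal{C}(\mathcal{T})=\sigma(N_A\mid A\in\mathcal{T})$. A family separates points of $S$ if for any distinct $x,y\in S$ it contains a set containing exactly one of $x,y$. *)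

theory Defs
  imports "HOL-Analysis.Analysis" "HOL-Library.Extended_Nat"
begin

definition countable_subsets :: "'a set \<Rightarrow> 'a set set" where
  "countable_subsets S = {M. M \<subseteq> S \<and> countable M}"

definition count_in :: "'a set \<Rightarrow> 'a set \<Rightarrow> enat" where
  "count_in A M = (if finite (A \<inter> M) then enat (card (A \<inter> M)) else \<infinity>)"

text \<open>\<C>(T) = \<sigma>(N_A | A \<in> T) on C(S), with the discrete sigma algebra on enat.\<close>
definition gen_sigma :: "'a set \<Rightarrow> 'a set set \<Rightarrow> 'a set set set" where
  "gen_sigma S T = sigma_sets (countable_subsets S)
     {{M \<in> countable_subsets S. count_in A M \<in> B} | A B. A \<in> T}"

definition separates_points :: "'a set \<Rightarrow> 'a set set \<Rightarrow> bool" where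
  "separates_points S F \<longleftrightarrow>
     (\<forall>x\<in>S. \<forall>y\<in>S. x \<noteq> y \<longrightarrow> (\<exists>B\<in>F. (x \<in> B) \<noteq> (y \<in> B)))"

end

theory Submission
  imports Defs
begin

(*
  An event of the sigma-algebra generated by the counting maps N_e (e in E)
  is determined by the counts along countably many e in E.  For A in T the event
  "M misses A" lies in C(T), hence in C(E), and so depends on countably many sets of E.
  Collecting these sets for A and for a countable separating subfamily of T gives one
  sequence f of sets of E such that
    (i)  f separates the points of S (compare the singletons {x} and {y}), and
    (ii) each x in A has a finite "cell" {z in S. z in f j <-> x in f j for all j < n}
         inside A: otherwise points y_n of the cells outside A either repeat a value
         forever (contradicting (i)) or form an infinite set Y for which Y and
         insert x Y have the same counts along f, although only Y misses A.
  Hence A is the union of the (countably many) cells contained in it, and every cell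
  is a finite intersection of sets f j and complements S - f j.
*)

lemma count_in_singleton: "count_in e {x} = (if x \<in> e then 1 else 0)"
  by (auto simp: count_in_def one_enat_def zero_enat_def)

lemma count_in_eq_0_iff: "count_in e M = 0 \<longleftrightarrow> e \<inter> M = {}"
  by (auto simp: count_in_def zero_enat_def)

lemma count_in_insert_eq:
  assumes "x \<notin> e \<or> infinite (e \<inter> Y)"
  shows "count_in e (insert x Y) = count_in e Y"
proof (cases "x \<in> e")
  case False
  then have "e \<inter> insert x Y = e \<inter> Y" by blast
  then show ?thesis by (simp add: count_in_def)
next
  case True
  with assms have "infinite (e \<inter> Y)" by blast
  moreover from this have "infinite (e \<inter> insert x Y)"
    using finite_subset[of "e \<inter> Y" "e \<inter> insert x Y"] by blast
  ultimately show ?thesis by (simp add: count_in_def)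
qed

section \<open>Countable support of generated events\<close>

definition count_determined :: "'a set set \<Rightarrow> 'a set set \<Rightarrow> 'a set set \<Rightarrow> bool" where
  "count_determined \<Omega> E0 G \<longleftrightarrow>
     (\<forall>M\<in>\<Omega>. \<forall>M'\<in>\<Omega>. (\<forall>e\<in>E0. count_in e M = count_in e M') \<longrightarrow> (M \<in> G \<longleftrightarrow> M' \<in> G))"

lemma count_determined_mono:
  "count_determined \<Omega> E0 G \<Longrightarrow> E0 \<subseteq> E1 \<Longrightarrow> count_determined \<Omega> E1 G"
  unfolding count_determined_def by blast

text \<open>Every event of the sigma-algebra generated by the counting maps of E is determined
  by countably many members of E: the events with this property form a sigma-algebra
  containing the generators.\<close>
lemma countable_support:
  assumes "G \<in> sigma_sets \<Omega> {{M \<in> \<Omega>. count_in e M \<in> B} | e B. e \<in> E}"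
  shows "\<exists>E0\<subseteq>E. countable E0 \<and> count_determined \<Omega> E0 G"
  using assms
proof induct
  case (Basic G)
  then obtain e B where "G = {M \<in> \<Omega>. count_in e M \<in> B}" "e \<in> E" by blast
  then show ?case
    by (intro exI[of _ "{e}"]) (auto simp: count_determined_def)
next
  case Empty
  show ?case by (intro exI[of _ "{}"]) (auto simp: count_determined_def)
next
  case (Compl G)
  then show ?case by (auto simp: count_determined_def)
next
  case (Union G)
  then obtain Ef where Ef: "\<And>i. Ef i \<subseteq> E" "\<And>i. countable (Ef i)"
    "\<And>i. count_determined \<Omega> (Ef i) (G i)"
    by metis
  have "count_determined \<Omega> (\<Union>i. Ef i) (G i)" for i
    using Ef(3) by (rule count_determined_mono) blast
  then have "count_determined \<Omega> (\<Union>i. Ef i) (\<Union>i. G i)"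
    unfolding count_determined_def by blast
  with Ef(1,2) show ?case
    by (intro exI[of _ "\<Union>i. Ef i"]) auto
qed

definition avoiders :: "'a set \<Rightarrow> 'a set \<Rightarrow> 'a set set" where
  "avoiders S A = {M \<in> countable_subsets S. count_in A M = 0}"

lemma mem_avoiders: "M \<in> avoiders S A \<longleftrightarrow> M \<in> countable_subsets S \<and> A \<inter> M = {}"
  by (simp add: avoiders_def count_in_eq_0_iff)

lemma avoiders_countable_support:
  assumes "A \<in> T" and "gen_sigma S T \<subseteq> gen_sigma S E"
  shows "\<exists>E0\<subseteq>E. countable E0 \<and> count_determined (countable_subsets S) E0 (avoiders S A)"
proof -
  have "avoiders S A \<in> gen_sigma S T"
    unfolding gen_sigma_def avoiders_def using assms(1)
    by (intro sigma_sets.Basic) (auto intro!: exI[of _ "{0}"])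
  with assms(2) have "avoiders S A \<in> gen_sigma S E" by blast
  then show ?thesis
    unfolding gen_sigma_def by (rule countable_support)
qed

section \<open>Cells of a sequence of sets\<close>

definition cell :: "'a set \<Rightarrow> (nat \<Rightarrow> 'a set) \<Rightarrow> 'a \<Rightarrow> nat \<Rightarrow> 'a set" where
  "cell S f x n = {z \<in> S. \<forall>j<n. z \<in> f j \<longleftrightarrow> x \<in> f j}"

lemma cell_antimono: "n \<le> m \<Longrightarrow> cell S f x m \<subseteq> cell S f x n"
  unfolding cell_def by auto

text \<open>A sequence of sets determining the avoiders of every set of a separating family
  separates points itself: the singletons of two points are told apart by that family.\<close>
lemma separates_by_determining_sequence:
  assumes sep: "separates_points S T0"
    and det: "\<And>B. B \<in> T0 \<Longrightarrow> count_determined (countable_subsets S) (range f) (avoiders S B)"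
    and xy: "x \<in> S" "y \<in> S" "\<forall>j. x \<in> f j \<longleftrightarrow> y \<in> f j"
  shows "x = y"
proof (rule ccontr)
  assume "x \<noteq> y"
  with sep xy obtain B where B: "B \<in> T0" "(x \<in> B) \<noteq> (y \<in> B)"
    unfolding separates_points_def by blast
  have singletons: "{x} \<in> countable_subsets S" "{y} \<in> countable_subsets S"
    using xy by (auto simp: countable_subsets_def)
  have "\<forall>e\<in>range f. count_in e {x} = count_in e {y}"
    using xy(3) by (auto simp: count_in_singleton)
  with det[OF B(1)] singletons have "{x} \<in> avoiders S B \<longleftrightarrow> {y} \<in> avoiders S B"
    unfolding count_determined_def by blast
  with B(2) singletons show False by (auto simp: mem_avoiders)
qed

text \<open>A sequence visiting the shrinking cells of x infinitely often at one point z
  forces z to agree with x on every set of the sequence.\<close>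
lemma repeated_value_in_cells:
  assumes "\<And>n. y n \<in> cell S f x n" and "finite (range y)"
  obtains z where "z \<in> range y" "z \<in> S" "\<forall>j. z \<in> f j \<longleftrightarrow> x \<in> f j"
proof -
  obtain z where z: "z \<in> range y" "infinite (y -` {z})"
    using inf_img_fin_dom'[OF assms(2)] by auto
  have "z \<in> f j \<longleftrightarrow> x \<in> f j" for j
  proof -
    from z(2) obtain n where "n \<in> y -` {z}" "j < n"
      using infinite_nat_iff_unbounded by blast
    with assms(1)[of n] show ?thesis unfolding cell_def by auto
  qed
  moreover have "z \<in> S" using z(1) assms(1) unfolding cell_def by blast
  ultimately show ?thesis using z(1) that by blast
qed

lemma cell_subset:
  assumes det: "count_determined (countable_subsets S) (range f) (avoiders S A)"
    and sep: "\<And>x y. x \<in> S \<Longrightarrow> y \<in> S \<Longrightarrow> \<forall>j. x \<in> f j \<longleftrightarrow> y \<in> f j \<Longrightarrow> x = y"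
    and "A \<subseteq> S" and "x \<in> A"
  shows "\<exists>n. cell S f x n \<subseteq> A"
proof (rule ccontr)
  assume "\<not> ?thesis"
  then have "\<forall>n. \<exists>z. z \<in> cell S f x n \<and> z \<notin> A" by blast
  then obtain y where y: "\<And>n. y n \<in> cell S f x n" "\<And>n. y n \<notin> A" by metis
  have yS: "range y \<subseteq> S" using y(1) unfolding cell_def by blast
  show False
  proof (cases "finite (range y)")
    case True
    then obtain z where "z \<in> range y" "z \<in> S" "\<forall>j. z \<in> f j \<longleftrightarrow> x \<in> f j"
      using repeated_value_in_cells y(1) by metis
    with sep \<open>A \<subseteq> S\<close> \<open>x \<in> A\<close> y(2) show False by blast
  next
    case False
    define Y where "Y = range y"
    have configs: "Y \<in> countable_subsets S" "insert x Y \<in> countable_subsets S"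
      using yS \<open>A \<subseteq> S\<close> \<open>x \<in> A\<close> by (auto simp: countable_subsets_def Y_def)
    have "infinite (f j \<inter> Y)" if "x \<in> f j" for j
    proof -
      have "Y = y ` {..j} \<union> y ` {j<..}" unfolding Y_def by fastforce
      with False have "infinite (y ` {j<..})" by (auto simp: Y_def)
      moreover have "y ` {j<..} \<subseteq> f j \<inter> Y"
        using y(1) that unfolding cell_def Y_def by auto
      ultimately show ?thesis using finite_subset by blast
    qed
    then have "\<forall>e\<in>range f. count_in e (insert x Y) = count_in e Y"
      by (auto intro: count_in_insert_eq)
    with det configs have "insert x Y \<in> avoiders S A \<longleftrightarrow> Y \<in> avoiders S A"
      unfolding count_determined_def by blast
    moreover have "A \<inter> Y = {}" using y(2) by (auto simp: Y_def)
    ultimately show False using configs \<open>x \<in> A\<close> by (auto simp: mem_avoiders)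
  qed
qed

section \<open>Representation as a countable union of cells\<close>

definition pattern_cell :: "'a set \<Rightarrow> (nat \<Rightarrow> 'a set) \<Rightarrow> bool list \<Rightarrow> 'a set" where
  "pattern_cell S f bs = {z \<in> S. \<forall>j<length bs. z \<in> f j \<longleftrightarrow> bs ! j}"

text \<open>A nonempty pattern cell is a finite intersection of the sets f j and their
  complements, written with indices 1, ..., length bs as in the theorem.\<close>
lemma pattern_cell_as_Inter:
  assumes "bs \<noteq> []" and "\<And>j. f j \<subseteq> S"
  shows "(\<Inter>j\<in>{1..length bs}. if bs ! (j - 1) then f (j - 1) else S - f (j - 1))
         = pattern_cell S f bs"
proof -
  have "(\<Inter>j\<in>{1..length bs}. if bs ! (j - 1) then f (j - 1) else S - f (j - 1))
        = (\<Inter>j<length bs. if bs ! j then f j else S - f j)"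
  proof -
    have "{1..length bs} = Suc ` {..<length bs}" by (simp add: image_Suc_lessThan)
    then show ?thesis by (simp only: image_image diff_Suc_1)
  qed
  also have "\<dots> = pattern_cell S f bs"
  proof -
    have "z \<in> S" if "z \<in> (\<Inter>j<length bs. if bs ! j then f j else S - f j)" for z
    proof -
      have "z \<in> (if bs ! 0 then f 0 else S - f 0)"
        by (rule INT_D[OF that]) (use assms(1) in simp)
      with assms(2) show ?thesis by (auto split: if_splits)
    qed
    moreover have "z \<in> (if bs ! j then f j else S - f j) \<longleftrightarrow> (z \<in> f j \<longleftrightarrow> bs ! j)"
      if "z \<in> S" for z j
      using that by simp
    ultimately show ?thesis unfolding pattern_cell_def by blast
  qed
  finally show ?thesis .
qed

lemma cell_eq_pattern_cell:
  "cell S f x n = pattern_cell S f (map (\<lambda>j. x \<in> f j) [0..<n])"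
  unfolding cell_def pattern_cell_def by auto

text \<open>The cells are indexed
  by an enumeration of bit lists; indices of lists whose cell is not inside A are
  filled with the empty intersection f 0 \<inter> (S - f 0).\<close>
lemma union_of_cells_representation:
  assumes fE: "\<And>j. f j \<in> E" and fS: "\<And>j. f j \<subseteq> S" and "A \<subseteq> S"
    and cells: "\<And>x. x \<in> A \<Longrightarrow> \<exists>n. cell S f x n \<subseteq> A"
  shows "\<exists>(k::nat \<Rightarrow> nat) (F::nat \<Rightarrow> nat \<Rightarrow> 'a set) (c::nat \<Rightarrow> nat \<Rightarrow> bool).
           (\<forall>n. k n \<ge> 1 \<and> (\<forall>j\<in>{1..k n}. F n j \<in> E)) \<and>
           A = (\<Union>n. \<Inter>j\<in>{1..k n}. (if c n j then F n j else S - F n j))"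
proof -
  define good where "good bs \<longleftrightarrow> bs \<noteq> [] \<and> pattern_cell S f bs \<subseteq> A" for bs
  define bits where "bits i = (from_nat i :: bool list)" for i
  define k where "k i = (if good (bits i) then length (bits i) else 2)" for i
  define F where "F i j = (if good (bits i) then f (j - 1) else f 0)" for i j :: nat
  define c where "c i j = (if good (bits i) then bits i ! (j - 1) else j = 1)" for i j :: nat
  define D where "D i = (\<Inter>j\<in>{1..k i}. if c i j then F i j else S - F i j)" for i
  have D_good: "D i = pattern_cell S f (bits i)" if "good (bits i)" for i
    using that pattern_cell_as_Inter[of "bits i" f S] fS by (simp add: D_def k_def F_def c_def good_def)
  have D_bad: "D i = {}" if "\<not> good (bits i)" for i
  proof -
    have "{1..(2::nat)} = {1, 2}" by auto
    with that show ?thesis by (auto simp: D_def k_def F_def c_def)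
  qed
  have "x \<in> (\<Union>i. D i)" if "x \<in> A" for x
  proof -
    from cells[OF that] obtain n where "cell S f x n \<subseteq> A" by blast
    moreover have "cell S f x (Suc n) \<subseteq> cell S f x n" by (rule cell_antimono) simp
    ultimately have sub: "cell S f x (Suc n) \<subseteq> A" by blast
    define bs where "bs = map (\<lambda>j. x \<in> f j) [0..<Suc n]"
    have cell_bs: "pattern_cell S f bs = cell S f x (Suc n)"
      by (simp only: bs_def cell_eq_pattern_cell)
    have "bs \<noteq> []" by (simp add: bs_def)
    with sub have "good bs" by (simp add: good_def cell_bs)
    moreover have "x \<in> pattern_cell S f bs"
      using that \<open>A \<subseteq> S\<close> by (auto simp: cell_bs cell_def)
    moreover have "bits (to_nat bs) = bs" by (simp add: bits_def)
    ultimately show ?thesis using D_good[of "to_nat bs"] by auto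
  qed
  moreover have "D i \<subseteq> A" for i
    by (cases "good (bits i)") (auto simp: D_good D_bad good_def)
  ultimately have "A = (\<Union>i. D i)" by blast
  moreover have "k i \<ge> 1 \<and> (\<forall>j\<in>{1..k i}. F i j \<in> E)" for i
    using fE by (auto simp: k_def F_def good_def Suc_le_eq)
  ultimately show ?thesis unfolding D_def by blast
qed

theorem corollary3p6:
  fixes S :: "'a set" and T E :: "'a set set"
  assumes "T \<noteq> {}" and "T \<subseteq> Pow S"
    and "\<exists>T0\<subseteq>T. countable T0 \<and> separates_points S T0"
    and "E \<noteq> {}" and "E \<subseteq> Pow S"
    and "gen_sigma S T \<subseteq> gen_sigma S E"
  shows "\<forall>A\<in>T. \<exists>(k::nat \<Rightarrow> nat) (F::nat \<Rightarrow> nat \<Rightarrow> 'a set) (c::nat \<Rightarrow> nat \<Rightarrow> bool).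
           (\<forall>n. k n \<ge> 1 \<and> (\<forall>j\<in>{1..k n}. F n j \<in> E)) \<and>
           A = (\<Union>n. \<Inter>j\<in>{1..k n}. (if c n j then F n j else S - F n j))"
proof
  fix A assume "A \<in> T"
  obtain T0 where T0: "T0 \<subseteq> T" "countable T0" "separates_points S T0" using assms(3) by blast
  obtain e0 where "e0 \<in> E" using assms(4) by blast
  obtain supp where supp: "\<And>B. B \<in> T \<Longrightarrow> supp B \<subseteq> E \<and> countable (supp B) \<and>
      count_determined (countable_subsets S) (supp B) (avoiders S B)"
    using avoiders_countable_support[OF _ assms(6)] by metis
  define E0 where "E0 = insert e0 (supp A \<union> (\<Union>B\<in>T0. supp B))"
  define f where "f = from_nat_into E0"
  have "countable E0" using supp \<open>A \<in> T\<close> T0(1,2) by (auto simp: E0_def)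
  then have range_f: "range f = E0" by (simp add: f_def E0_def range_from_nat_into)
  have supp_sub: "supp B \<subseteq> range f" if "B \<in> insert A T0" for B
    using that unfolding range_f E0_def by blast
  have det: "count_determined (countable_subsets S) (range f) (avoiders S B)"
    if "B \<in> insert A T0" for B
  proof -
    from that T0(1) \<open>A \<in> T\<close> have "B \<in> T" by blast
    with supp show ?thesis using count_determined_mono supp_sub[OF that] by blast
  qed
  have fE: "f j \<in> E" for j
  proof -
    have "f j \<in> E0" using range_f by blast
    then show ?thesis unfolding E0_def using supp \<open>A \<in> T\<close> T0(1) \<open>e0 \<in> E\<close> by blast
  qed
  have fS: "f j \<subseteq> S" for j using fE assms(5) by blast
  have "A \<subseteq> S" using \<open>A \<in> T\<close> assms(2) by blast
  have sep: "x = y" if "x \<in> S" "y \<in> S" "\<forall>j. x \<in> f j \<longleftrightarrow> y \<in> f j" for x y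
    using separates_by_determining_sequence[OF T0(3) det[OF insertI2]] that by blast
  have cells: "\<exists>n. cell S f x n \<subseteq> A" if "x \<in> A" for x
    using cell_subset[OF det[OF insertI1] sep \<open>A \<subseteq> S\<close> that] .
  show "\<exists>(k::nat \<Rightarrow> nat) (F::nat \<Rightarrow> nat \<Rightarrow> 'a set) (c::nat \<Rightarrow> nat \<Rightarrow> bool).
           (\<forall>n. k n \<ge> 1 \<and> (\<forall>j\<in>{1..k n}. F n j \<in> E)) \<and>
           A = (\<Union>n. \<Inter>j\<in>{1..k n}. (if c n j then F n j else S - F n j))"
    by (rule union_of_cells_representation[OF fE fS \<open>A \<subseteq> S\<close> cells])
qed

end
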